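(* Let $0<p\le2$. The function $r\mapsto\|r\|_p^p$ from $\mathbb{R}_\infty$ to $\mathbb{R}_+$ is a morphism on an arbitrary large subset of $\mathbb{R}_\infty$: for every $N,M\in\mathbb{N}$ and every $s_1,\dots,s_M\in\mathbb{R}_+$ there exist elements $g_{n,k}\in\mathbb{R}_\infty$ ($1\le n\le N$, $1\le k\le M$) such that $\|g_{n,j}^{-1}g_{m,k}\|_p^p=s_j+s_k$ for all $j,k$ and all $n\ne m$.
   Context: $\mathbb{R}_+=[0,\infty)$. $\mathbb{R}_\infty$ (the free real line with infinitely many generators) is the free product of countably many copies $\mathbb{R}^{(1)},\mathbb{R}^{(2)},\dots$ of the additive group $\mathbb{R}$. Every $r\ne e$ in $\mathbb{R}_\infty$ is uniquely a reduced word $r=x_1x_2\cdots x_n$ with $x_j\in\mathbb{R}^{(i_j)}\setminus\{0\}$ and $i_j\ne i_{j+1}$; its $\ell^p$ length is $\|r\|_p=(\sum_{j=1}^n|x_j|^p)^{1/p}$, and $\|e\|_p=0$. *)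

theory Defs
  imports Complex_Main
begin

text \<open>Elements of the free real line R_infty (free product of countably many copies
  R^(i), i :: nat, of the additive group of reals) are represented by reduced words:
  lists of letters (i, x) with x in R^(i), x nonzero, and consecutive indices distinct.
  The empty list is the identity e.\<close>

type_synonym fword = "(nat \<times> real) list"

fun reduced :: "fword \<Rightarrow> bool" where
  "reduced [] = True"
| "reduced [(i, x)] = (x \<noteq> 0)"
| "reduced ((i, x) # (j, y) # ws) = (x \<noteq> 0 \<and> i \<noteq> j \<and> reduced ((j, y) # ws))"

fun push :: "nat \<times> real \<Rightarrow> fword \<Rightarrow> fword" where
  "push (i, x) [] = (if x = 0 then [] else [(i, x)])"
| "push (i, x) ((j, y) # ws) =
     (if i = j then (if x + y = 0 then ws else (i, x + y) # ws)
      else if x = 0 then (j, y) # ws else (i, x) # (j, y) # ws)"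

text \<open>Group product in R_infty (for reduced arguments the result is reduced).\<close>
definition fmult :: "fword \<Rightarrow> fword \<Rightarrow> fword" where
  "fmult u v = foldr push u v"

definition finv :: "fword \<Rightarrow> fword" where
  "finv u = rev (map (\<lambda>(i, x). (i, - x)) u)"

definition lp_len :: "real \<Rightarrow> fword \<Rightarrow> real" where
  "lp_len p u = (\<Sum>(i, x)\<leftarrow>u. \<bar>x\<bar> powr p) powr (1 / p)"

end

theory Submission
  imports Defs
begin

text \<open>Take for \<open>g n k\<close> the single letter \<open>s k powr (1/p)\<close> of the \<open>n\<close>-th copy of the
  reals. For \<open>n \<noteq> m\<close> the product \<open>(g n j)\<inverse> g m k\<close> is already a reduced word of two letters,
  of absolute values \<open>s j powr (1/p)\<close> and \<open>s k powr (1/p)\<close>, so its \<open>p\<close>-th power length is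
  \<open>s j + s k\<close>.\<close>

definition letter :: "nat \<Rightarrow> real \<Rightarrow> fword" where
  "letter i x = (if x = 0 then [] else [(i, x)])"

lemma reduced_letter: "reduced (letter i x)"
  by (simp add: letter_def)

lemma fmult_finv_letter_letter:
  assumes "i \<noteq> j"
  shows "fmult (finv (letter i a)) (letter j b) = letter i (- a) @ letter j b"
  using assms by (simp add: letter_def fmult_def finv_def)

lemma sum_list_letter_powr: "(\<Sum>(i, x)\<leftarrow>letter j a. \<bar>x\<bar> powr p) = \<bar>a\<bar> powr p"
  by (simp add: letter_def)

lemma lp_len_powr:
  assumes "0 < p"
  shows "lp_len p u powr p = (\<Sum>(i, x)\<leftarrow>u. \<bar>x\<bar> powr p)"
proof -
  have "0 \<le> (\<Sum>(i, x)\<leftarrow>u. \<bar>x\<bar> powr p)"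
    by (induction u) auto
  then show ?thesis
    using assms by (simp add: lp_len_def powr_powr)
qed

lemma lp_len_powr_finv_letter_mult_letter:
  assumes "0 < p" and "i \<noteq> j"
  shows "lp_len p (fmult (finv (letter i a)) (letter j b)) powr p = \<bar>a\<bar> powr p + \<bar>b\<bar> powr p"
  using assms by (simp add: lp_len_powr fmult_finv_letter_letter sum_list_letter_powr)

theorem proposition4p7:
  fixes p :: real
  assumes "0 < p" and "p \<le> 2"
  shows "\<forall>(N::nat) (M::nat) (s::nat \<Rightarrow> real).
           (\<forall>k\<in>{1..M}. 0 \<le> s k) \<longrightarrow>
           (\<exists>g :: nat \<Rightarrow> nat \<Rightarrow> fword.
              (\<forall>n\<in>{1..N}. \<forall>k\<in>{1..M}. reduced (g n k)) \<and>
              (\<forall>n\<in>{1..N}. \<forall>m\<in>{1..N}. n \<noteq> m \<longrightarrow>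
                 (\<forall>j\<in>{1..M}. \<forall>k\<in>{1..M}.
                    lp_len p (fmult (finv (g n j)) (g m k)) powr p = s j + s k)))"
proof (intro allI impI)
  fix N M :: nat and s :: "nat \<Rightarrow> real"
  assume s_nonneg: "\<forall>k\<in>{1..M}. 0 \<le> s k"
  have root_powr: "(s k powr (1 / p)) powr p = s k" if "k \<in> {1..M}" for k
    using s_nonneg that assms(1) by (simp add: powr_powr)
  show "\<exists>g. (\<forall>n\<in>{1..N}. \<forall>k\<in>{1..M}. reduced (g n k)) \<and>
          (\<forall>n\<in>{1..N}. \<forall>m\<in>{1..N}. n \<noteq> m \<longrightarrow>
             (\<forall>j\<in>{1..M}. \<forall>k\<in>{1..M}.
                lp_len p (fmult (finv (g n j)) (g m k)) powr p = s j + s k))"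
  proof (rule exI[of _ "\<lambda>n k. letter n (s k powr (1 / p))"], intro conjI ballI impI)
    fix n k :: nat
    show "reduced (letter n (s k powr (1 / p)))"
      by (rule reduced_letter)
  next
    fix n m j k :: nat
    assume "n \<noteq> m" and "j \<in> {1..M}" and "k \<in> {1..M}"
    then show "lp_len p (fmult (finv (letter n (s j powr (1 / p)))) (letter m (s k powr (1 / p)))) powr p
        = s j + s k"
      using assms(1) by (simp add: lp_len_powr_finv_letter_mult_letter root_powr)
  qed
qed

end
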